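(* Let $T:\mathcal{M}_2\to\mathcal{M}_2$ be a random Pauli channel $T(\rho)=p_1\sigma_1\rho\sigma_1+p_2\sigma_2\rho\sigma_2+p_3\sigma_3\rho\sigma_3+(1-p_1-p_2-p_3)\rho$ and define $p=2\min\{p_1p_2+p_1p_3,\,p_2p_1+p_2p_3,\,p_3p_1+p_3p_2\}$. Then for every density matrix $\rho\in\mathcal{M}_2$, $$S(T(\rho))-S(\rho)\geq p(\log 2-S(\rho)).$$
   Context: $(p_1,p_2,p_3,1-p_1-p_2-p_3)$ is a probability distribution, $\sigma_i$ are the Pauli matrices, and $S(\rho)=-\text{tr}(\rho\log\rho)$. *)

theory Defs
  imports "Jordan_Normal_Form.Schur_Decomposition" "HOL-Computational_Algebra.Polynomial"
begin

definition sigma1 :: "complex mat" where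
  "sigma1 = mat_of_rows_list 2 [[0, 1], [1, 0]]"
definition sigma2 :: "complex mat" where
  "sigma2 = mat_of_rows_list 2 [[0, - \<i>], [\<i>, 0]]"
definition sigma3 :: "complex mat" where
  "sigma3 = mat_of_rows_list 2 [[1, 0], [0, -1]]"

definition mtrace :: "complex mat \<Rightarrow> complex" where
  "mtrace A = (\<Sum>i<dim_row A. A $$ (i, i))"

definition density_matrix :: "complex mat \<Rightarrow> bool" where
  "density_matrix \<rho> \<longleftrightarrow> \<rho> \<in> carrier_mat 2 2 \<and> mat_adjoint \<rho> = \<rho> \<and>
     (\<forall>v \<in> carrier_vec 2. 0 \<le> Re (conjugate v \<bullet> (\<rho> *\<^sub>v v))) \<and> mtrace \<rho> = 1"

definition pauli_channel :: "real \<Rightarrow> real \<Rightarrow> real \<Rightarrow> complex mat \<Rightarrow> complex mat" where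
  "pauli_channel p1 p2 p3 \<rho> =
     complex_of_real p1 \<cdot>\<^sub>m (sigma1 * \<rho> * sigma1) +
     complex_of_real p2 \<cdot>\<^sub>m (sigma2 * \<rho> * sigma2) +
     complex_of_real p3 \<cdot>\<^sub>m (sigma3 * \<rho> * sigma3) +
     complex_of_real (1 - p1 - p2 - p3) \<cdot>\<^sub>m \<rho>"

text \<open>Von Neumann entropy S(rho) = - tr(rho log rho) = - sum over eigenvalues (counted with
  algebraic multiplicity, i.e. as roots of the characteristic polynomial) of
  lambda * ln lambda, with the convention 0 ln 0 = 0 (ln 0 = 0 in Isabelle).
  Eigenvalues of a Hermitian matrix are real, hence Re.\<close>
definition vn_entropy :: "complex mat \<Rightarrow> real" where
  "vn_entropy \<rho> = - (\<Sum>a \<in> {a. poly (char_poly \<rho>) a = 0}.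
       real (order a (char_poly \<rho>)) * (Re a * ln (Re a)))"

end

theory Submission
  imports Defs "HOL-Real_Asymp.Real_Asymp"
begin

text \<open>
  A qubit state is \<rho> = (I + r1 \<sigma>1 + r2 \<sigma>2 + r3 \<sigma>3) / 2 with |r| \<le> 1; its eigenvalues are
  (1 \<plusminus> |r|) / 2, hence S(\<rho>) = ln 2 - G(|r|) with G(t) = ((1 + t) ln (1 + t) + (1 - t) ln (1 - t)) / 2.
  The Pauli channel multiplies r1, r2, r3 by 1 - 2 (p2 + p3), 1 - 2 (p1 + p3), 1 - 2 (p1 + p2),
  whose squares are at most 1 - p, so the Bloch radii s of T(\<rho>) and t of \<rho> satisfy
  s^2 \<le> (1 - p) t^2. Since G(t) / t^2 is nondecreasing on ]0, 1] (its derivative has the sign of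
  t artanh t - 2 G(t) \<ge> 0), G(s) \<le> (s / t)^2 G(t) \<le> (1 - p) G(t), i.e.
  S(T(\<rho>)) - S(\<rho>) = G(t) - G(s) \<ge> p G(t).
\<close>

section \<open>The entropy deficit of a qubit\<close>

text \<open>The function G above, i.e. ln 2 minus the binary entropy of (1 + t) / 2.\<close>
definition entropy_deficit :: "real \<Rightarrow> real" where
  "entropy_deficit t = ((1 + t) * ln (1 + t) + (1 - t) * ln (1 - t)) / 2"

lemma entropy_deficit_0 [simp]: "entropy_deficit 0 = 0"
  by (simp add: entropy_deficit_def)

lemma artanh_real_eq:
  fixes x :: real
  assumes "-1 < x" "x < 1"
  shows "artanh x = (ln (1 + x) - ln (1 - x)) / 2"
  using assms by (simp add: artanh_def ln_div)

lemma entropy_deficit_has_real_derivative: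
  assumes "-1 < x" "x < 1"
  shows "(entropy_deficit has_real_derivative artanh x) (at x)"
  unfolding entropy_deficit_def[abs_def] artanh_real_eq[OF assms]
  using assms by (auto intro!: derivative_eq_intros)

lemma continuous_on_entropy_deficit: "continuous_on {0..1} entropy_deficit"
  unfolding continuous_on_eq_continuous_within
proof
  fix x :: real assume x: "x \<in> {0..1}"
  show "continuous (at x within {0..1}) entropy_deficit"
  proof (cases "x = 1")
    case True
    have "(entropy_deficit \<longlongrightarrow> entropy_deficit 1) (at_left 1)"
      unfolding entropy_deficit_def by real_asymp
    then show ?thesis
      using True by (simp add: continuous_within at_within_Icc_at_left)
  next
    case False
    then show ?thesis
      using x entropy_deficit_has_real_derivative[of x]
      by (auto intro: continuous_at_imp_continuous_at_within DERIV_isCont)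
  qed
qed

lemma artanh_le_divide:
  fixes x :: real
  assumes "0 \<le> x" "x < 1"
  shows "artanh x \<le> x / (1 - x\<^sup>2)"
proof -
  let ?w = "\<lambda>y. y / (1 - y\<^sup>2) - artanh y"
  have "?w 0 \<le> ?w x"
  proof (rule DERIV_nonneg_imp_nondecreasing[OF assms(1)])
    fix y :: real assume "0 \<le> y" "y \<le> x"
    then have y: "-1 < y" "y < 1" "y\<^sup>2 < 1"
      using assms by (auto simp: abs_square_less_1)
    have "1 - y\<^sup>2 \<noteq> 0" using y by simp
    then have "(?w has_real_derivative 2 * y\<^sup>2 / (1 - y\<^sup>2)\<^sup>2) (at y)"
      using y by (auto intro!: derivative_eq_intros)
        (simp add: divide_simps, simp add: algebra_simps power2_eq_square)
    then show "\<exists>d. (?w has_real_derivative d) (at y) \<and> 0 \<le> d" by force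
  qed
  then show ?thesis by simp
qed

lemma two_entropy_deficit_le_mult_artanh:
  assumes "0 \<le> x" "x < 1"
  shows "2 * entropy_deficit x \<le> x * artanh x"
proof -
  let ?w = "\<lambda>y. y * artanh y - 2 * entropy_deficit y"
  have "?w 0 \<le> ?w x"
  proof (rule DERIV_nonneg_imp_nondecreasing[OF assms(1)])
    fix y :: real assume "0 \<le> y" "y \<le> x"
    then have y: "0 \<le> y" "-1 < y" "y < 1" using assms by auto
    have "(?w has_real_derivative y / (1 - y\<^sup>2) - artanh y) (at y)"
      using y by (auto intro!: derivative_eq_intros entropy_deficit_has_real_derivative)
    with artanh_le_divide[OF y(1,3)]
    show "\<exists>d. (?w has_real_derivative d) (at y) \<and> 0 \<le> d" by force
  qed
  then show ?thesis by simp
qed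

lemma entropy_deficit_nonneg:
  assumes "0 \<le> t" "t \<le> 1"
  shows "0 \<le> entropy_deficit t"
proof -
  have "entropy_deficit 0 \<le> entropy_deficit t"
  proof (rule DERIV_nonneg_imp_increasing_open[OF assms(1)])
    fix x :: real assume "0 < x" "x < t"
    then have x: "0 < x" "x < 1" using assms by auto
    then have "0 \<le> artanh x" by (simp add: artanh_real_eq)
    with entropy_deficit_has_real_derivative[of x] x
    show "\<exists>y. (entropy_deficit has_real_derivative y) (at x) \<and> 0 \<le> y" by force
  next
    show "continuous_on {0..t} entropy_deficit"
      by (rule continuous_on_subset[OF continuous_on_entropy_deficit]) (use assms in auto)
  qed
  then show ?thesis by simp
qed

lemma entropy_deficit_div_square_mono:
  assumes "0 < a" "a \<le> b" "b \<le> 1"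
  shows "entropy_deficit a / a\<^sup>2 \<le> entropy_deficit b / b\<^sup>2"
proof (rule DERIV_nonneg_imp_increasing_open[OF assms(2)])
  fix x assume "a < x" "x < b"
  then have x: "0 < x" "-1 < x" "x < 1" using assms by auto
  have "((\<lambda>x. entropy_deficit x / x\<^sup>2) has_real_derivative
          (x * artanh x - 2 * entropy_deficit x) / x ^ 3) (at x)"
    using x by (auto intro!: derivative_eq_intros entropy_deficit_has_real_derivative
        simp: field_simps power2_eq_square power3_eq_cube)
  moreover have "0 \<le> (x * artanh x - 2 * entropy_deficit x) / x ^ 3"
    using two_entropy_deficit_le_mult_artanh[of x] x by simp
  ultimately show "\<exists>y. ((\<lambda>x. entropy_deficit x / x\<^sup>2) has_real_derivative y) (at x) \<and> 0 \<le> y"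
    by blast
next
  have "continuous_on {a..b} entropy_deficit"
    by (rule continuous_on_subset[OF continuous_on_entropy_deficit]) (use assms in auto)
  then show "continuous_on {a..b} (\<lambda>x. entropy_deficit x / x\<^sup>2)"
    by (intro continuous_intros) (use assms in auto)
qed

lemma entropy_deficit_le_scaled:
  assumes "0 \<le> s" "s \<le> t" "t \<le> 1" "s\<^sup>2 \<le> k * t\<^sup>2"
  shows "entropy_deficit s \<le> k * entropy_deficit t"
proof (cases "s = 0")
  case True
  have "0 \<le> k * entropy_deficit t"
  proof (cases "t = 0")
    case False
    then have "0 \<le> k" using assms True by (simp add: zero_le_mult_iff)
    then show ?thesis using entropy_deficit_nonneg assms by simp
  qed simp
  then show ?thesis using True by simp
next
  case False
  then have "0 < s" "0 < t" using assms by auto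
  then have "entropy_deficit s = s\<^sup>2 * (entropy_deficit s / s\<^sup>2)" by simp
  also have "\<dots> \<le> s\<^sup>2 * (entropy_deficit t / t\<^sup>2)"
    using \<open>0 < s\<close> assms by (intro mult_left_mono entropy_deficit_div_square_mono) auto
  also have "\<dots> \<le> (k * t\<^sup>2) * (entropy_deficit t / t\<^sup>2)"
    using assms entropy_deficit_nonneg[of t] \<open>0 < t\<close> by (intro mult_right_mono) auto
  also have "\<dots> = k * entropy_deficit t" using \<open>0 < t\<close> by simp
  finally show ?thesis .
qed

section \<open>Hermitian 2x2 matrices of unit trace\<close>

lemma det_2x2:
  assumes "(A :: 'a :: comm_ring_1 mat) \<in> carrier_mat 2 2"
  shows "det A = A $$ (0,0) * A $$ (1,1) - A $$ (0,1) * A $$ (1,0)"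
proof -
  have "det A = A $$ (0,0) * cofactor A 0 0 + A $$ (1,0) * cofactor A 1 0"
    using laplace_expansion_column[OF assms, of 0] by (simp add: numeral_2_eq_2)
  moreover have "cofactor A 0 0 = A $$ (1,1)" "cofactor A 1 0 = - A $$ (0,1)"
    unfolding cofactor_def using assms by (subst det_single, auto simp: mat_delete_def)+
  ultimately show ?thesis by (simp add: algebra_simps)
qed

lemma char_poly_2x2:
  assumes "(A :: 'a :: comm_ring_1 mat) \<in> carrier_mat 2 2"
  shows "char_poly A =
    [:A $$ (0,0) * A $$ (1,1) - A $$ (0,1) * A $$ (1,0), - (A $$ (0,0) + A $$ (1,1)), 1:]"
  using assms unfolding char_poly_def det_2x2[OF char_poly_matrix_closed[OF assms]]
  by (simp add: char_poly_matrix_def)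

lemma vn_entropy_eq_of_char_poly:
  assumes "char_poly M = [:-a, 1:] * [:-b, 1:]"
  shows "vn_entropy M = - (Re a * ln (Re a) + Re b * ln (Re b))"
proof -
  have "poly (char_poly M) z = (z - a) * (z - b)" for z
    unfolding assms by (simp add: algebra_simps)
  then have roots: "{z. poly (char_poly M) z = 0} = {a, b}" by auto
  show ?thesis
  proof (cases "a = b")
    case True
    then have "char_poly M = [:-a, 1:] ^ 2" using assms by (simp add: power2_eq_square)
    then have "order a (char_poly M) = 2" using order_power_n_n by metis
    then show ?thesis unfolding vn_entropy_def roots using True by simp
  next
    case False
    have "order a [:-b, 1:] = 0" "order b [:-a, 1:] = 0"
      using False by (auto intro: order_0I)
    moreover have "order a [:-a, 1:] = 1" "order b [:-b, 1:] = 1"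
      using order_power_n_n[of _ 1] by simp_all
    moreover have "[:-a, 1:] * [:-b, 1:] \<noteq> 0" by simp
    ultimately have "order a (char_poly M) = 1" "order b (char_poly M) = 1"
      unfolding assms by (auto simp del: mult_pCons_left mult_pCons_right simp add: order_mult)
    then show ?thesis unfolding vn_entropy_def roots using False by simp
  qed
qed

lemma index_mat_adjoint:
  assumes "A \<in> carrier_mat n n" "i < n" "j < n"
  shows "mat_adjoint A $$ (i,j) = conjugate (A $$ (j,i))"
  using assms by (simp add: mat_adjoint_def mat_of_rows_def cols_def)

lemma quadratic_form_2x2:
  assumes "A \<in> carrier_mat 2 2"
  shows "conjugate (vec 2 f) \<bullet> (A *\<^sub>v vec 2 f) =
    cnj (f 0) * (A $$ (0,0) * f 0 + A $$ (0,1) * f 1) +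
    cnj (f 1) * (A $$ (1,0) * f 0 + A $$ (1,1) * f 1)"
  using assms by (simp add: scalar_prod_def numeral_2_eq_2 mult_mat_vec_def row_def)

definition hermitian_unit_trace_2x2 :: "complex mat \<Rightarrow> bool" where
  "hermitian_unit_trace_2x2 M \<longleftrightarrow> M \<in> carrier_mat 2 2 \<and> M $$ (0,0) \<in> \<real> \<and>
     M $$ (1,1) = 1 - M $$ (0,0) \<and> M $$ (1,0) = cnj (M $$ (0,1))"

lemma hermitian_unit_trace_2x2E:
  assumes "hermitian_unit_trace_2x2 M"
  obtains x where "M \<in> carrier_mat 2 2" "M $$ (0,0) = of_real x" "M $$ (1,1) = of_real (1 - x)"
    "M $$ (1,0) = cnj (M $$ (0,1))"
  using assms unfolding hermitian_unit_trace_2x2_def by (auto elim!: Reals_cases)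

text \<open>For M = (I + r1 \<sigma>1 + r2 \<sigma>2 + r3 \<sigma>3) / 2 one has r3 = M00 - M11 and r1 - i r2 = 2 M01.\<close>
definition bloch_radius :: "complex mat \<Rightarrow> real" where
  "bloch_radius M = sqrt ((Re (M $$ (0,0) - M $$ (1,1)))\<^sup>2 + (2 * cmod (M $$ (0,1)))\<^sup>2)"

lemma bloch_radius_nonneg: "0 \<le> bloch_radius M"
  by (simp add: bloch_radius_def)

lemma bloch_radius_sq:
  "(bloch_radius M)\<^sup>2 =
    (Re (M $$ (0,0) - M $$ (1,1)))\<^sup>2 + (2 * Re (M $$ (0,1)))\<^sup>2 + (2 * Im (M $$ (0,1)))\<^sup>2"
  by (simp add: bloch_radius_def power_mult_distrib cmod_power2)

lemma ln_two_sub_entropy_deficit: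
  assumes "-1 \<le> t" "t \<le> 1"
  shows "ln 2 - entropy_deficit t =
    - ((1 + t) / 2 * ln ((1 + t) / 2) + (1 - t) / 2 * ln ((1 - t) / 2))"
proof -
  have half: "u / 2 * ln (u / 2) = (u * ln u - u * ln 2) / 2" if "0 \<le> u" for u :: real
    using that by (cases "u = 0") (auto simp: ln_div algebra_simps)
  show ?thesis
    using half[of "1 + t"] half[of "1 - t"] assms
    by (simp add: entropy_deficit_def field_simps)
qed

lemma vn_entropy_hermitian_unit_trace_2x2:
  assumes "hermitian_unit_trace_2x2 M" "bloch_radius M \<le> 1"
  shows "vn_entropy M = ln 2 - entropy_deficit (bloch_radius M)"
proof -
  obtain x where M: "M \<in> carrier_mat 2 2" "M $$ (0,0) = of_real x" "M $$ (1,1) = of_real (1 - x)"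
    "M $$ (1,0) = cnj (M $$ (0,1))"
    using assms(1) by (rule hermitian_unit_trace_2x2E)
  let ?t = "bloch_radius M" and ?g = "M $$ (0,1)"
  have "?t\<^sup>2 = (2 * x - 1)\<^sup>2 + 4 * (cmod ?g)\<^sup>2"
    unfolding bloch_radius_def using M by (simp add: power_mult_distrib)
  then have det: "x * (1 - x) - (cmod ?g)\<^sup>2 = (1 + ?t) / 2 * ((1 - ?t) / 2)"
    by (simp add: algebra_simps power2_eq_square)
  have "?g * cnj ?g = of_real ((cmod ?g)\<^sup>2)"
    by (rule complex_norm_square[symmetric])
  then have "char_poly M = [:x * (1 - x) - (cmod ?g)\<^sup>2, -1, 1:]"
    unfolding char_poly_2x2[OF M(1)] M(2-4) by simp
  also have "\<dots> = [:- of_real ((1 + ?t) / 2), 1:] * [:- of_real ((1 - ?t) / 2), 1:]"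
    unfolding det by (simp add: algebra_simps) (simp add: add_divide_distrib[symmetric])
  finally have "vn_entropy M =
      - ((1 + ?t) / 2 * ln ((1 + ?t) / 2) + (1 - ?t) / 2 * ln ((1 - ?t) / 2))"
    by (simp only: vn_entropy_eq_of_char_poly Re_complex_of_real)
  also have "\<dots> = ln 2 - entropy_deficit ?t"
    using bloch_radius_nonneg[of M] assms(2) by (simp add: ln_two_sub_entropy_deficit)
  finally show ?thesis .
qed

lemma density_matrix_hermitian_unit_trace_2x2:
  assumes "density_matrix \<rho>"
  shows "hermitian_unit_trace_2x2 \<rho>"
proof -
  have C: "\<rho> \<in> carrier_mat 2 2" and H: "mat_adjoint \<rho> = \<rho>" and T: "mtrace \<rho> = 1"
    using assms unfolding density_matrix_def by auto
  have hermitian: "\<rho> $$ (i,j) = cnj (\<rho> $$ (j,i))" if "i < 2" "j < 2" for i j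
    using index_mat_adjoint[OF C that] H by simp
  have "\<rho> $$ (0,0) + \<rho> $$ (1,1) = 1"
    using T C unfolding mtrace_def by (simp add: numeral_2_eq_2)
  then have "\<rho> $$ (1,1) = 1 - \<rho> $$ (0,0)"
    by (simp add: eq_diff_eq add.commute)
  then show ?thesis
    using C hermitian[of 0 0] hermitian[of 1 0]
    unfolding hermitian_unit_trace_2x2_def by (auto simp: Reals_cnj_iff)
qed

lemma bloch_radius_density_matrix_le_1:
  assumes "density_matrix \<rho>"
  shows "bloch_radius \<rho> \<le> 1"
proof -
  obtain x where C: "\<rho> \<in> carrier_mat 2 2" and e: "\<rho> $$ (0,0) = of_real x"
    "\<rho> $$ (1,1) = of_real (1 - x)" "\<rho> $$ (1,0) = cnj (\<rho> $$ (0,1))"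
    using density_matrix_hermitian_unit_trace_2x2[OF assms] by (rule hermitian_unit_trace_2x2E)
  let ?g = "\<rho> $$ (0,1)"
  define d where "d = x * (1 - x) - (cmod ?g)\<^sup>2"
  have psd: "0 \<le> Re (cnj (f 0) * (\<rho> $$ (0,0) * f 0 + ?g * f 1) +
      cnj (f 1) * (\<rho> $$ (1,0) * f 0 + \<rho> $$ (1,1) * f 1))" for f :: "nat \<Rightarrow> complex"
    using assms quadratic_form_2x2[OF C, of f] unfolding density_matrix_def
    by (metis vec_carrier)
  \<comment> \<open>Test positivity on (g, -x) and (x - 1, cnj g); d is the determinant of \<rho>.\<close>
  have "0 \<le> x * d"
    using psd[of "\<lambda>i. if i = 0 then ?g else - of_real x"] unfolding e d_def cmod_power2
    by (simp add: algebra_simps power2_eq_square)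
  moreover have "0 \<le> (1 - x) * d"
    using psd[of "\<lambda>i. if i = 0 then of_real (x - 1) else cnj ?g"] unfolding e d_def cmod_power2
    by (simp add: algebra_simps power2_eq_square)
  moreover have "d = x * d + (1 - x) * d"
    by (simp add: algebra_simps)
  ultimately have "0 \<le> d" by linarith
  then have "(bloch_radius \<rho>)\<^sup>2 \<le> 1"
    unfolding bloch_radius_sq e d_def cmod_power2 by (simp add: algebra_simps power2_eq_square)
  then show ?thesis
    using bloch_radius_nonneg by (simp add: power_le_one_iff)
qed

section \<open>The Pauli channel\<close>

lemma pauli_matrices_carrier_mat:
  "sigma1 \<in> carrier_mat 2 2" "sigma2 \<in> carrier_mat 2 2" "sigma3 \<in> carrier_mat 2 2"
  unfolding sigma1_def sigma2_def sigma3_def mat_of_rows_list_def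
  by (simp_all add: numeral_2_eq_2)

lemma pauli_channel_carrier_mat:
  assumes "\<rho> \<in> carrier_mat 2 2"
  shows "pauli_channel p1 p2 p3 \<rho> \<in> carrier_mat 2 2"
  using assms pauli_matrices_carrier_mat unfolding pauli_channel_def
  by (metis add_carrier_mat smult_carrier_mat)

lemma pauli_channel_entries:
  assumes "\<rho> \<in> carrier_mat 2 2"
  shows "pauli_channel p1 p2 p3 \<rho> $$ (0,0) =
      of_real (p1 + p2) * \<rho> $$ (1,1) + of_real (1 - p1 - p2) * \<rho> $$ (0,0)"
    "pauli_channel p1 p2 p3 \<rho> $$ (1,1) =
      of_real (p1 + p2) * \<rho> $$ (0,0) + of_real (1 - p1 - p2) * \<rho> $$ (1,1)"
    "pauli_channel p1 p2 p3 \<rho> $$ (0,1) =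
      of_real (1 - p1 - p2 - 2 * p3) * \<rho> $$ (0,1) + of_real (p1 - p2) * \<rho> $$ (1,0)"
    "pauli_channel p1 p2 p3 \<rho> $$ (1,0) =
      of_real (1 - p1 - p2 - 2 * p3) * \<rho> $$ (1,0) + of_real (p1 - p2) * \<rho> $$ (0,1)"
  using assms unfolding pauli_channel_def sigma1_def sigma2_def sigma3_def
  by (simp_all add: mat_of_rows_list_def scalar_prod_def numeral_2_eq_2 algebra_simps)

lemma hermitian_unit_trace_2x2_pauli_channel:
  assumes "hermitian_unit_trace_2x2 \<rho>"
  shows "hermitian_unit_trace_2x2 (pauli_channel p1 p2 p3 \<rho>)"
proof -
  obtain x where C: "\<rho> \<in> carrier_mat 2 2" and e: "\<rho> $$ (0,0) = of_real x"
    "\<rho> $$ (1,1) = of_real (1 - x)" "\<rho> $$ (1,0) = cnj (\<rho> $$ (0,1))"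
    using assms by (rule hermitian_unit_trace_2x2E)
  show ?thesis
    unfolding hermitian_unit_trace_2x2_def pauli_channel_entries[OF C] e
    using pauli_channel_carrier_mat[OF C]
    by (simp add: algebra_simps)
qed

lemma bloch_radius_pauli_channel_le:
  assumes "hermitian_unit_trace_2x2 \<rho>"
    and "(1 - 2 * (p2 + p3))\<^sup>2 \<le> k" "(1 - 2 * (p1 + p3))\<^sup>2 \<le> k" "(1 - 2 * (p1 + p2))\<^sup>2 \<le> k"
  shows "(bloch_radius (pauli_channel p1 p2 p3 \<rho>))\<^sup>2 \<le> k * (bloch_radius \<rho>)\<^sup>2"
proof -
  obtain x where C: "\<rho> \<in> carrier_mat 2 2" and e: "\<rho> $$ (0,0) = of_real x"
    "\<rho> $$ (1,1) = of_real (1 - x)" "\<rho> $$ (1,0) = cnj (\<rho> $$ (0,1))"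
    using assms(1) by (rule hermitian_unit_trace_2x2E)
  define r1 r2 r3
    where "r1 = 2 * Re (\<rho> $$ (0,1))" and "r2 = 2 * Im (\<rho> $$ (0,1))" and "r3 = 2 * x - 1"
  have "(bloch_radius (pauli_channel p1 p2 p3 \<rho>))\<^sup>2 =
      (1 - 2 * (p2 + p3))\<^sup>2 * r1\<^sup>2 + (1 - 2 * (p1 + p3))\<^sup>2 * r2\<^sup>2 + (1 - 2 * (p1 + p2))\<^sup>2 * r3\<^sup>2"
    unfolding bloch_radius_sq pauli_channel_entries[OF C] e r1_def r2_def r3_def
    by (simp add: algebra_simps power2_eq_square)
  also have "\<dots> \<le> k * r1\<^sup>2 + k * r2\<^sup>2 + k * r3\<^sup>2"
    using assms(2-4) by (intro add_mono mult_right_mono) auto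
  also have "\<dots> = k * (bloch_radius \<rho>)\<^sup>2"
    unfolding bloch_radius_sq e r1_def r2_def r3_def by (simp add: algebra_simps)
  finally show ?thesis .
qed

lemma pauli_contraction_sq_le:
  fixes a b c q :: real
  assumes "0 \<le> a" "0 \<le> b" "0 \<le> c" "a + b + c \<le> 1" "q \<le> 2 * (a * b + a * c)"
  shows "(1 - 2 * (b + c))\<^sup>2 \<le> 1 - q"
proof -
  have "(b + c) * a \<le> (b + c) * (1 - (b + c))"
    using assms by (intro mult_left_mono) auto
  moreover have "0 \<le> a * b + a * c" using assms by simp
  ultimately show ?thesis using assms(5) by (simp add: algebra_simps power2_eq_square)
qed

lemma pauli_contraction_factors_sq_le:
  fixes p1 p2 p3 :: real
  assumes "0 \<le> p1" "0 \<le> p2" "0 \<le> p3" "p1 + p2 + p3 \<le> 1"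
  defines "p \<equiv> 2 * min (p1 * p2 + p1 * p3) (min (p2 * p1 + p2 * p3) (p3 * p1 + p3 * p2))"
  shows "(1 - 2 * (p2 + p3))\<^sup>2 \<le> 1 - p" "(1 - 2 * (p1 + p3))\<^sup>2 \<le> 1 - p"
      "(1 - 2 * (p1 + p2))\<^sup>2 \<le> 1 - p"
proof -
  have bounds: "p \<le> 2 * (p1 * p2 + p1 * p3)" "p \<le> 2 * (p2 * p1 + p2 * p3)"
      "p \<le> 2 * (p3 * p1 + p3 * p2)"
    unfolding p_def by (intro mult_left_mono; simp add: min_le_iff_disj)+
  show "(1 - 2 * (p2 + p3))\<^sup>2 \<le> 1 - p"
    by (rule pauli_contraction_sq_le[of p1]) (use assms bounds in auto)
  show "(1 - 2 * (p1 + p3))\<^sup>2 \<le> 1 - p"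
    by (rule pauli_contraction_sq_le[of p2]) (use assms bounds in auto)
  show "(1 - 2 * (p1 + p2))\<^sup>2 \<le> 1 - p"
    by (rule pauli_contraction_sq_le[of p3]) (use assms bounds in auto)
qed

theorem mainTheorem18:
  fixes p1 p2 p3 :: real and \<rho> :: "complex mat"
  assumes "0 \<le> p1" "0 \<le> p2" "0 \<le> p3" "0 \<le> 1 - p1 - p2 - p3"
    and "density_matrix \<rho>"
  defines "p \<equiv> 2 * min (p1 * p2 + p1 * p3) (min (p2 * p1 + p2 * p3) (p3 * p1 + p3 * p2))"
  shows "vn_entropy (pauli_channel p1 p2 p3 \<rho>) - vn_entropy \<rho> \<ge> p * (ln 2 - vn_entropy \<rho>)"
proof -
  define t s where "t = bloch_radius \<rho>" and "s = bloch_radius (pauli_channel p1 p2 p3 \<rho>)"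
  have \<rho>: "hermitian_unit_trace_2x2 \<rho>" "t \<le> 1"
    using assms(5) unfolding t_def
    by (auto intro: density_matrix_hermitian_unit_trace_2x2 bloch_radius_density_matrix_le_1)
  have "p1 + p2 + p3 \<le> 1" using assms(4) by simp
  from pauli_contraction_factors_sq_le[OF assms(1-3) this, folded p_def]
  have contraction: "s\<^sup>2 \<le> (1 - p) * t\<^sup>2"
    unfolding s_def t_def by (rule bloch_radius_pauli_channel_le[OF \<rho>(1)])
  moreover have "0 \<le> p * t\<^sup>2" unfolding p_def using assms(1-3) by simp
  ultimately have "s\<^sup>2 \<le> t\<^sup>2" by (simp add: algebra_simps)
  then have "s \<le> t"
    by (rule power2_le_imp_le) (simp add: t_def bloch_radius_nonneg)
  have deficit: "entropy_deficit s \<le> (1 - p) * entropy_deficit t"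
    using \<open>s \<le> t\<close> \<rho>(2) contraction bloch_radius_nonneg unfolding s_def
    by (intro entropy_deficit_le_scaled) auto
  have entropy_\<rho>: "vn_entropy \<rho> = ln 2 - entropy_deficit t"
    unfolding t_def by (rule vn_entropy_hermitian_unit_trace_2x2) (use \<rho> t_def in auto)
  have entropy_channel: "vn_entropy (pauli_channel p1 p2 p3 \<rho>) = ln 2 - entropy_deficit s"
    unfolding s_def using \<open>s \<le> t\<close> \<rho> s_def
    by (intro vn_entropy_hermitian_unit_trace_2x2 hermitian_unit_trace_2x2_pauli_channel) auto
  show ?thesis
    unfolding entropy_\<rho> entropy_channel using deficit by (simp add: left_diff_distrib)
qed

end
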